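(* Under the data model, network assumptions, and running consensus algorithm below, for every node $i$, every $l\in\{0,1\}$ and every $\mu\in\mathbb{R}$, $$\lim_{k\to\infty}\frac1k\log\mathbb{E}\big[\exp(k\mu\,x_i(k))\,\big|\,H_l\big]=\frac12\sigma_L^2\mu^2+m_L^{(l)}\mu,$$ where $m_L^{(l)}=\frac{(-1)^{l+1}}{2}(m_1-m_0)^\top S^{-1}(m_1-m_0)$ and $\sigma_L^2=(m_1-m_0)^\top S^{-1}(m_1-m_0)$.
   Context: Data model: $N$ sensors; at each time $k=1,2,\dots$ the observation vector is $y(k)=(y_1(k),\dots,y_N(k))^\top$ with $y(k)=m_l+\zeta(k)$ under $H_l$, $l=0,1$, where $m_0,m_1\in\mathbb{R}^N$ are constant and $\{\zeta(k)\}$ is i.i.d. $\mathcal{N}(0,S)$ with $S$ positive definite. Let $v=S^{-1}(m_1-m_0)$ and $\eta_i(k)=v_i\big(y_i(k)-\frac{[m_1]_i+[m_0]_i}{2}\big)$, $\eta(k)=(\eta_1(k),\dots,\eta_N(k))^\top$. Network assumptions: $\{W(k)\}_{k\ge1}$ is a deterministic sequence of $N\times N$ matrices such that (1) each $W(k)$ is symmetric and stochastic; (2) there is $W_{\min}\in(0,1)$ with $W_{ii}(k)\ge W_{\min}$ for all $i,k$, and $W_{ij}(k)\ge W_{\min}$ whenever $i\ne j$ and $W_{ij}(k)>0$; (3) with $\mathcal{E}(k)=\{\{i,j\}: i<j,\ W_{ij}(k)>0\}$, there is an integer $B\ge1$ such that for every $k$ the undirected graph on $\{1,\dots,N\}$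 with edge set $\bigcup_{l=k+1}^{k+B}\mathcal{E}(l)$ is connected. Running consensus algorithm: $x(1)=N\eta(1)$ and $x(k+1)=\frac{k}{k+1}W(k)x(k)+\frac{1}{k+1}N\eta(k+1)$ for $k\ge1$. *)

theory Defs
  imports "HOL-Probability.Probability"
begin

definition pos_def_mat :: "real^'n^'n \<Rightarrow> bool" where
  "pos_def_mat S \<longleftrightarrow> transpose S = S \<and> (\<forall>z. z \<noteq> 0 \<longrightarrow> z \<bullet> (S *v z) > 0)"

definition gauss_density :: "real^'n^'n \<Rightarrow> real^'n \<Rightarrow> ennreal" where
  "gauss_density S z =
     ennreal (exp (- (z \<bullet> (matrix_inv S *v z)) / 2) / sqrt ((2 * pi) ^ CARD('n) * det S))"

definition stochastic_mat :: "real^'n^'n \<Rightarrow> bool" where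
  "stochastic_mat A \<longleftrightarrow> (\<forall>i j. A $ i $ j \<ge> 0) \<and> (\<forall>i. (\<Sum>j\<in>UNIV. A $ i $ j) = 1)"

definition graph_connected :: "('n \<times> 'n) set \<Rightarrow> bool" where
  "graph_connected E \<longleftrightarrow> (\<forall>i j. (i, j) \<in> (E \<union> E\<inverse>)\<^sup>*)"

definition edges_of :: "real^'n^'n \<Rightarrow> ('n \<times> 'n) set" where
  "edges_of A = {(i, j). i \<noteq> j \<and> A $ i $ j > 0}"

definition eta_of :: "real^'n^'n \<Rightarrow> real^'n \<Rightarrow> real^'n \<Rightarrow> real^'n \<Rightarrow> real^'n" where
  "eta_of S m0 m1 y = (\<chi> i. (matrix_inv S *v (m1 - m0)) $ i * (y $ i - (m1 $ i + m0 $ i) / 2))"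

text \<open>Running consensus: x(1) = N eta(1),
  x(k+1) = k/(k+1) W(k) x(k) + 1/(k+1) N eta(k+1). The value at index 0 is irrelevant.\<close>
primrec run_cons :: "(nat \<Rightarrow> real^'n^'n) \<Rightarrow> (nat \<Rightarrow> real^'n) \<Rightarrow> nat \<Rightarrow> real^'n" where
  "run_cons W e 0 = 0"
| "run_cons W e (Suc k) =
     (if k = 0 then real CARD('n) *\<^sub>R e 1
      else (real k / real (k + 1)) *\<^sub>R (W k *v run_cons W e k)
           + (1 / real (k + 1)) *\<^sub>R (real CARD('n) *\<^sub>R e (k + 1)))"

end

theory Submission
  imports Defs
begin

text \<open>
  Let Phi(k,t) = W(k-1) ... W(t) be the transition matrices of the
  network and N the number of nodes.  Unrolling the recursion gives
  k x(k) = N * sum_{t=1..k} Phi(k,t) eta(t), so k mu x_i(k) is a sum of independent affine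
  functionals beta(k,t) . (d + zeta(t)) of the Gaussian noise, with deterministic weights
  beta(k,t) built from row i of Phi(k,t).  Hence the moment generating function factorises
  exactly: E exp(k mu x_i(k)) = exp (sum_t g(beta(k,t))), where g(beta) = beta.d + beta.S beta/2
  is the Gaussian cumulant generating function.
  The network assumptions imply that every product of N*B consecutive weight matrices has
  all entries at least delta = Wmin^(N*B); therefore Phi(k,t) converges to the uniform matrix
  with entries 1/N geometrically in (k-t) div (N*B).  As g is locally Lipschitz,
  g(beta(k,t)) approaches g(mu v) at the same rate, and a Cesaro-type averaging lemma gives
  (1/k) sum_t g(beta(k,t)) --> g(mu v), which evaluates to the claimed limit.
\<close>

section \<open>Transition matrices and the unrolled recursion\<close>

primrec Phi :: "(nat \<Rightarrow> real^'n^'n) \<Rightarrow> nat \<Rightarrow> nat \<Rightarrow> real^'n^'n" where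
  "Phi W t 0 = mat 1"
| "Phi W t (Suc s) = W (t+s) ** Phi W t s"

lemma Phi_add: "Phi W t (a+b) = Phi W (t+a) b ** Phi W t a"
  by (induction b) (simp_all add: matrix_mul_assoc add.assoc)

lemma matrix_vector_mult_sum: "(A::real^'n^'m) *v (\<Sum>t\<in>T. f t) = (\<Sum>t\<in>T. A *v f t)"
  by (induction T rule: infinite_finite_induct) (simp_all add: matrix_vector_right_distrib)

lemma mv_nth: "((A::real^'n^'m) *v x) $ a = (\<Sum>b\<in>UNIV. A $ a $ b * x $ b)"
  by (simp add: matrix_vector_mult_def)

lemma mm_nth: "((A::real^'n^'m) ** B) $ a $ c = (\<Sum>b\<in>UNIV. A $ a $ b * B $ b $ c)"
  by (simp add: matrix_matrix_mult_def)

lemma run_cons_sum: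
  fixes W :: "nat \<Rightarrow> real^'n^'n"
  shows "real k *\<^sub>R run_cons W e k = (\<Sum>t\<in>{1..k}. real CARD('n) *\<^sub>R (Phi W t (k-t) *v e t))"
proof (induction k)
  case 0
  then show ?case by simp
next
  case (Suc k)
  show ?case
  proof (cases "k = 0")
    case True
    then show ?thesis by simp
  next
    case False
    have extend: "\<And>t. t \<in> {1..k} \<Longrightarrow> W k ** Phi W t (k - t) = Phi W t (Suc k - t)"
      by (simp add: Suc_diff_le)
    have "real (Suc k) *\<^sub>R run_cons W e (Suc k)
        = W k *v (real k *\<^sub>R run_cons W e k) + real CARD('n) *\<^sub>R e (Suc k)"
    proof -
      have c1: "(real CARD('n) + real k * real CARD('n)) / (1 + real k) = real CARD('n)"
        by (simp add: field_simps)
      have c2: "(real k + real k * real k) / (1 + real k) = real k"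
        by (simp add: field_simps)
      show ?thesis
        using False by (simp add: scaleR_add_right matrix_vector_mult_scaleR[symmetric] field_simps c1 c2)
    qed
    also have "\<dots> = (\<Sum>t\<in>{1..k}. real CARD('n) *\<^sub>R (Phi W t (Suc k - t) *v e t)) + real CARD('n) *\<^sub>R e (Suc k)"
      unfolding Suc.IH
      by (simp add: matrix_vector_mult_sum matrix_vector_mult_scaleR matrix_vector_mul_assoc del: Phi.simps)
        (rule sum.cong, simp_all add: extend del: Phi.simps)
    also have "\<dots> = (\<Sum>t\<in>{1..Suc k}. real CARD('n) *\<^sub>R (Phi W t (Suc k - t) *v e t))"
      by (simp add: sum.cl_ivl_Suc)
    finally show ?thesis .
  qed
qed

text \<open>The weight vector beta(k,t) with which the observation at time t enters k mu x_i(k).\<close>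
definition consensus_weight ::
    "(nat \<Rightarrow> real^'n^'n) \<Rightarrow> 'n \<Rightarrow> real \<Rightarrow> real^'n \<Rightarrow> nat \<Rightarrow> nat \<Rightarrow> real^'n" where
  "consensus_weight W i \<mu> v k t = (\<chi> j. (\<mu> * real CARD('n) * v $ j) * Phi W t (k - t) $ i $ j)"

lemma scaled_consensus_state:
  fixes W :: "nat \<Rightarrow> real^'n^'n"
  shows "real k * \<mu> * (run_cons W (\<lambda>t. eta_of S m0 m1 (m + z t)) k) $ i
    = (\<Sum>t\<in>{1..k}. consensus_weight W i \<mu> (matrix_inv S *v (m1 - m0)) k t
                     \<bullet> ((\<chi> j. m $ j - (m1 $ j + m0 $ j) / 2) + z t))"
proof -
  let ?v = "matrix_inv S *v (m1 - m0)"
  let ?d = "\<chi> j. m $ j - (m1 $ j + m0 $ j) / 2"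
  have eta: "eta_of S m0 m1 (m + y) $ j = ?v $ j * (?d $ j + y $ j)" for y j
    by (simp add: eta_of_def algebra_simps)
  have "real k * \<mu> * (run_cons W (\<lambda>t. eta_of S m0 m1 (m + z t)) k) $ i
      = \<mu> * (real k *\<^sub>R run_cons W (\<lambda>t. eta_of S m0 m1 (m + z t)) k) $ i"
    by simp
  also have "\<dots> = \<mu> * (\<Sum>t\<in>{1..k}. real CARD('n) *
                   (\<Sum>j\<in>UNIV. Phi W t (k - t) $ i $ j * (?v $ j * (?d $ j + z t $ j))))"
    unfolding run_cons_sum by (simp add: mv_nth eta)
  also have "\<dots> = (\<Sum>t\<in>{1..k}. consensus_weight W i \<mu> ?v k t \<bullet> (?d + z t))"
    by (simp add: consensus_weight_def inner_vec_def sum_distrib_left algebra_simps)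
  finally show ?thesis .
qed

section \<open>Contraction of the spread by stochastic matrices\<close>

lemma ex_argmin: "\<exists>b0. \<forall>b. (f::'n::finite \<Rightarrow> real) b0 \<le> f b"
proof -
  have "Min (range f) \<in> range f" by (rule Min_in) auto
  then obtain b0 where "f b0 = Min (range f)" by (metis imageE)
  then show ?thesis by (metis Min_le finite UNIV_I finite_imageI image_eqI)
qed

lemma ex_argmax: "\<exists>b0. \<forall>b. f b \<le> (f::'n::finite \<Rightarrow> real) b0"
  using ex_argmin[of "\<lambda>b. - f b"] by auto

definition spread_le :: "real^'n \<Rightarrow> real \<Rightarrow> bool" where
  "spread_le y r \<longleftrightarrow> (\<forall>a b. y $ a - y $ b \<le> r)"

lemma contract_bounds:
  fixes P :: "real^'n^'n"
  assumes nn: "\<And>a b. 0 \<le> P $ a $ b" and rows: "\<And>a. (\<Sum>b\<in>UNIV. P $ a $ b) = 1"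
    and dl: "\<And>a b. \<delta> \<le> P $ a $ b"
    and b0: "\<And>b. y $ b0 \<le> y $ b" and b1: "\<And>b. y $ b \<le> y $ b1"
  shows "(P *v y) $ a \<le> y $ b1 - \<delta> * (y $ b1 - y $ b0)"
    and "y $ b0 + \<delta> * (y $ b1 - y $ b0) \<le> (P *v y) $ a"
proof -
  have "y $ b1 - (P *v y) $ a = (\<Sum>b\<in>UNIV. P $ a $ b * (y $ b1 - y $ b))"
    by (simp add: mv_nth right_diff_distrib sum_subtractf sum_distrib_right[symmetric] rows)
  also have "\<dots> \<ge> P $ a $ b0 * (y $ b1 - y $ b0)"
    by (rule member_le_sum) (auto intro!: mult_nonneg_nonneg nn simp: b1)
  moreover have "P $ a $ b0 * (y $ b1 - y $ b0) \<ge> \<delta> * (y $ b1 - y $ b0)"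
    by (rule mult_right_mono) (auto simp: dl b0 b1)
  ultimately show "(P *v y) $ a \<le> y $ b1 - \<delta> * (y $ b1 - y $ b0)" by linarith
  have "(P *v y) $ a - y $ b0 = (\<Sum>b\<in>UNIV. P $ a $ b * (y $ b - y $ b0))"
    by (simp add: mv_nth right_diff_distrib sum_subtractf sum_distrib_right[symmetric] rows)
  also have "\<dots> \<ge> P $ a $ b1 * (y $ b1 - y $ b0)"
    by (rule member_le_sum) (auto intro!: mult_nonneg_nonneg nn simp: b0)
  moreover have "P $ a $ b1 * (y $ b1 - y $ b0) \<ge> \<delta> * (y $ b1 - y $ b0)"
    by (rule mult_right_mono) (auto simp: dl b0 b1)
  ultimately show "y $ b0 + \<delta> * (y $ b1 - y $ b0) \<le> (P *v y) $ a" by linarith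
qed

lemma contract_spread:
  fixes P :: "real^'n^'n"
  assumes nn: "\<And>a b. 0 \<le> P $ a $ b" and rows: "\<And>a. (\<Sum>b\<in>UNIV. P $ a $ b) = 1"
    and dl: "\<And>a b. \<delta> \<le> P $ a $ b" and d0: "0 \<le> \<delta>" "\<delta> \<le> 1"
    and sp: "spread_le y r"
  shows "spread_le (P *v y) ((1 - \<delta>) * r)"
proof -
  obtain b0 where b0: "\<And>b. y $ b0 \<le> y $ b" using ex_argmin[of "\<lambda>b. y $ b"] by auto
  obtain b1 where b1: "\<And>b. y $ b \<le> y $ b1" using ex_argmax[of "\<lambda>b. y $ b"] by auto
  have D: "y $ b1 - y $ b0 \<le> r" using sp by (simp add: spread_le_def)
  have D0: "0 \<le> y $ b1 - y $ b0" using b0[of b1] by simp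
  show ?thesis unfolding spread_le_def
  proof (intro allI)
    fix a a'
    have "(P *v y) $ a - (P *v y) $ a' \<le> (1 - 2*\<delta>) * (y $ b1 - y $ b0)"
      using contract_bounds(1)[OF nn rows dl b0 b1, of a] contract_bounds(2)[OF nn rows dl b0 b1, of a']
      by (simp add: algebra_simps)
    also have "\<dots> \<le> (1 - \<delta>) * (y $ b1 - y $ b0)"
      using D0 d0 by (intro mult_right_mono) auto
    also have "\<dots> \<le> (1 - \<delta>) * r"
      using D d0 by (intro mult_left_mono) auto
    finally show "(P *v y) $ a - (P *v y) $ a' \<le> (1 - \<delta>) * r" .
  qed
qed

lemma spread_abs:
  fixes y :: "real^'n"
  assumes sp: "spread_le y r" and s: "(\<Sum>b\<in>UNIV. y $ b) = 1"
  shows "\<bar>y $ a - 1 / real CARD('n)\<bar> \<le> r"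
proof -
  have N: "real CARD('n) > 0" by simp
  have "y $ a - 1 / real CARD('n) = (\<Sum>b\<in>UNIV. y $ a - y $ b) / real CARD('n)"
    using N by (simp add: sum_subtractf s field_simps)
  also have "\<bar>\<dots>\<bar> \<le> (\<Sum>b\<in>UNIV. \<bar>y $ a - y $ b\<bar>) / real CARD('n)"
    using N by (simp add: divide_right_mono sum_abs)
  also have "\<dots> \<le> (\<Sum>b\<in>(UNIV::'n set). r) / real CARD('n)"
    using sp N unfolding spread_le_def
    by (intro divide_right_mono sum_mono) (auto simp: abs_le_iff)
  also have "\<dots> = r" using N by simp
  finally show ?thesis .
qed

section \<open>Mixing of the network\<close>

lemma rtrancl_cross:
  assumes "(x, y) \<in> R\<^sup>*" "x \<in> A" "y \<notin> A"
  shows "\<exists>u v. (u, v) \<in> R \<and> u \<in> A \<and> v \<notin> A"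
  using assms by (induction rule: rtrancl_induct) auto

locale consensus_network =
  fixes W :: "nat \<Rightarrow> real^'n^'n" and Wmin :: real and B :: nat
  assumes W_sym: "\<And>k. k \<ge> 1 \<Longrightarrow> transpose (W k) = W k"
    and W_stoch: "\<And>k. k \<ge> 1 \<Longrightarrow> stochastic_mat (W k)"
    and Wmin: "0 < Wmin" "Wmin < 1"
    and W_diag: "\<And>k j. k \<ge> 1 \<Longrightarrow> W k $ j $ j \<ge> Wmin"
    and W_off: "\<And>k j j'. k \<ge> 1 \<Longrightarrow> j \<noteq> j' \<Longrightarrow> W k $ j $ j' > 0 \<Longrightarrow> W k $ j $ j' \<ge> Wmin"
    and B_pos: "B \<ge> 1"
    and conn: "\<And>k. graph_connected (\<Union>t\<in>{k+1..k+B}. edges_of (W t))"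
begin

lemma W_nn: "k \<ge> 1 \<Longrightarrow> 0 \<le> W k $ a $ b"
  using W_stoch by (simp add: stochastic_mat_def)

lemma W_rows: "k \<ge> 1 \<Longrightarrow> (\<Sum>b\<in>UNIV. W k $ a $ b) = 1"
  using W_stoch by (simp add: stochastic_mat_def)

lemma W_symm: "k \<ge> 1 \<Longrightarrow> W k $ a $ b = W k $ b $ a"
  using W_sym[of k] by (metis transpose_def vec_lambda_beta)

lemma W_cols: "k \<ge> 1 \<Longrightarrow> (\<Sum>a\<in>UNIV. W k $ a $ b) = 1"
  using W_rows[of k b] W_symm[of k] by simp

lemma Phi_nn: "t \<ge> 1 \<Longrightarrow> 0 \<le> Phi W t s $ a $ b"
proof (induction s arbitrary: a b)
  case 0 then show ?case by (simp add: mat_def)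
next
  case (Suc s) then show ?case
    by (auto simp: mm_nth intro!: sum_nonneg mult_nonneg_nonneg W_nn)
qed

lemma Phi_rows: "t \<ge> 1 \<Longrightarrow> (\<Sum>b\<in>UNIV. Phi W t s $ a $ b) = 1"
proof (induction s arbitrary: a)
  case 0 then show ?case by (simp add: mat_def)
next
  case (Suc s)
  have "(\<Sum>b\<in>UNIV. Phi W t (Suc s) $ a $ b) = (\<Sum>c\<in>UNIV. W (t+s) $ a $ c * (\<Sum>b\<in>UNIV. Phi W t s $ c $ b))"
    by (simp add: mm_nth sum_distrib_left) (rule sum.swap)
  also have "\<dots> = 1" using Suc by (simp add: W_rows)
  finally show ?case .
qed

lemma Phi_le1: "t \<ge> 1 \<Longrightarrow> Phi W t s $ a $ b \<le> 1"
proof -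
  assume t: "t \<ge> 1"
  have "Phi W t s $ a $ b \<le> (\<Sum>b\<in>UNIV. Phi W t s $ a $ b)"
    by (rule member_le_sum) (auto intro: Phi_nn t)
  then show ?thesis using Phi_rows[OF t] by simp
qed

lemma Phi_colsum: "t \<ge> 1 \<Longrightarrow> (\<Sum>a\<in>UNIV. (Phi W t s *v y) $ a) = (\<Sum>a\<in>UNIV. y $ a)"
proof (induction s)
  case 0 then show ?case by simp
next
  case (Suc s)
  have "(\<Sum>a\<in>UNIV. (Phi W t (Suc s) *v y) $ a) = (\<Sum>a\<in>UNIV. (W (t+s) *v (Phi W t s *v y)) $ a)"
    by (simp add: matrix_vector_mul_assoc)
  also have "\<dots> = (\<Sum>b\<in>UNIV. (\<Sum>a\<in>UNIV. W (t+s) $ a $ b) * (Phi W t s *v y) $ b)"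
    unfolding mv_nth[of "W (t+s)"] by (simp add: sum_distrib_right) (rule sum.swap)
  also have "\<dots> = (\<Sum>b\<in>UNIV. (Phi W t s *v y) $ b)" using Suc by (simp add: W_cols)
  finally show ?case using Suc by simp
qed

lemma step_ge: assumes k: "k \<ge> 1" and z: "\<And>c. 0 \<le> z $ c" shows "W k $ a $ b * z $ b \<le> (W k *v z) $ a"
  unfolding mv_nth by (rule member_le_sum) (auto intro: mult_nonneg_nonneg W_nn[OF k] z)

lemma step_diag: "k \<ge> 1 \<Longrightarrow> (\<And>c. 0 \<le> z $ c) \<Longrightarrow> Wmin * z $ a \<le> (W k *v z) $ a"
  by (rule order_trans[OF mult_right_mono step_ge]) (auto simp: W_diag)

lemma step_edge: "k \<ge> 1 \<Longrightarrow> (\<And>c. 0 \<le> z $ c) \<Longrightarrow> W k $ a $ b > 0 \<Longrightarrow> Wmin * z $ b \<le> (W k *v z) $ a"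
proof -
  assume k: "k \<ge> 1" and z: "\<And>c. 0 \<le> z $ c" and p: "W k $ a $ b > 0"
  have "Wmin \<le> W k $ a $ b"
    using k p W_off W_diag by (cases "a = b") auto
  then show ?thesis
    by (rule order_trans[OF mult_right_mono step_ge[OF k z]]) (auto simp: z)
qed

lemma Phi_vnn: "t \<ge> 1 \<Longrightarrow> (\<And>c. 0 \<le> z $ c) \<Longrightarrow> 0 \<le> (Phi W t s *v z) $ a"
  unfolding mv_nth by (auto intro!: sum_nonneg mult_nonneg_nonneg Phi_nn)

lemma Phi_decay: "t \<ge> 1 \<Longrightarrow> (\<And>c. 0 \<le> z $ c) \<Longrightarrow> Wmin ^ q * z $ a \<le> (Phi W t q *v z) $ a"
proof (induction q)
  case 0 then show ?case by simp
next
  case (Suc q)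
  have "Wmin ^ Suc q * z $ a = Wmin * (Wmin ^ q * z $ a)" by simp
  also have "\<dots> \<le> Wmin * (Phi W t q *v z) $ a"
    using Suc Wmin by (intro mult_left_mono) auto
  also have "\<dots> \<le> (W (t+q) *v (Phi W t q *v z)) $ a"
    using Suc by (intro step_diag Phi_vnn) auto
  finally show ?case by (simp add: matrix_vector_mul_assoc)
qed

lemma window_spreads:
  assumes t: "t \<ge> 1" and z: "\<And>c. 0 \<le> z $ c"
    and ne: "a0 \<in> {a. c \<le> z $ a}" and nu: "b0 \<notin> {a. c \<le> z $ a}"
  shows "\<exists>v. v \<notin> {a. c \<le> z $ a} \<and> Wmin ^ B * c \<le> (Phi W t B *v z) $ v"
proof -
  let ?A = "{a. c \<le> z $ a}"
  let ?E = "\<Union>\<tau>\<in>{t-1+1..t-1+B}. edges_of (W \<tau>)"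
  have "(a0, b0) \<in> (?E \<union> ?E\<inverse>)\<^sup>*" using conn[of "t-1"] by (simp add: graph_connected_def)
  from rtrancl_cross[OF this ne nu] obtain u v where uv: "(u, v) \<in> ?E \<union> ?E\<inverse>" "u \<in> ?A" "v \<notin> ?A"
    by blast
  then obtain \<tau> where tau: "\<tau> \<in> {t..t-1+B}" "W \<tau> $ v $ u > 0"
    using t W_symm by (auto simp: edges_of_def)
  have t1: "\<tau> \<ge> 1" using tau t by auto
  define p where "p = \<tau> - t"
  have p: "p < B" "\<tau> = t + p" using tau t B_pos unfolding p_def by auto
  have "Wmin ^ p * c \<le> (Phi W t p *v z) $ u"
    using Phi_decay[OF t z, of p u] uv Wmin by (auto intro: order_trans[OF mult_left_mono])
  then have "Wmin * (Wmin ^ p * c) \<le> Wmin * (Phi W t p *v z) $ u"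
    using Wmin by (intro mult_left_mono) auto
  also have "\<dots> \<le> (W \<tau> *v (Phi W t p *v z)) $ v"
    using t1 tau by (intro step_edge Phi_vnn t z) auto
  also have "\<dots> = (Phi W t (Suc p) *v z) $ v" using p by (simp add: matrix_vector_mul_assoc)
  finally have s1: "Wmin ^ Suc p * c \<le> (Phi W t (Suc p) *v z) $ v" by simp
  have "Wmin ^ B * c = Wmin ^ (B - Suc p) * (Wmin ^ Suc p * c)"
  proof -
    have "B = (B - Suc p) + Suc p" using p by simp
    then have "Wmin ^ B = Wmin ^ (B - Suc p) * Wmin ^ Suc p" by (metis power_add)
    then show ?thesis by simp
  qed
  also have "\<dots> \<le> Wmin ^ (B - Suc p) * (Phi W t (Suc p) *v z) $ v"
    using s1 Wmin by (intro mult_left_mono) auto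
  also have "\<dots> \<le> (Phi W (t + Suc p) (B - Suc p) *v (Phi W t (Suc p) *v z)) $ v"
    using t z by (intro Phi_decay Phi_vnn) auto
  also have "\<dots> = (Phi W t B *v z) $ v"
    using Phi_add[of W t "Suc p" "B - Suc p"] p by (simp add: matrix_vector_mul_assoc)
  finally show ?thesis using uv by blast
qed

lemma window_growth:
  assumes t: "t \<ge> 1" and z: "\<And>c. 0 \<le> z $ c"
    and count: "min CARD('n) (Suc n) \<le> card {a. c \<le> z $ a}"
  shows "min CARD('n) (Suc (Suc n)) \<le> card {a. Wmin ^ B * c \<le> (Phi W t B *v z) $ a}"
proof -
  define A where "A = {a. c \<le> z $ a}"
  define A' where "A' = {a. Wmin ^ B * c \<le> (Phi W t B *v z) $ a}"
  have kept: "A \<subseteq> A'"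
  proof
    fix a assume "a \<in> A"
    then have "Wmin ^ B * c \<le> Wmin ^ B * z $ a" using Wmin by (intro mult_left_mono) (auto simp: A_def)
    also have "\<dots> \<le> (Phi W t B *v z) $ a" by (rule Phi_decay[OF t z])
    finally show "a \<in> A'" by (simp add: A'_def)
  qed
  have count': "min CARD('n) (Suc n) \<le> card A" using count unfolding A_def .
  have "min CARD('n) (Suc (Suc n)) \<le> card A'"
  proof (cases "A = UNIV")
    case True
    then have "A' = UNIV" using kept by auto
    then show ?thesis by simp
  next
    case False
    then obtain b0 where b0: "b0 \<notin> A" by auto
    have "0 < min CARD('n) (Suc n)" by simp
    then have "card A \<noteq> 0" using count' by linarith
    then obtain a0 where a0: "a0 \<in> A" by (metis card.empty ex_in_conv)
    obtain v where v: "v \<notin> A" "Wmin ^ B * c \<le> (Phi W t B *v z) $ v"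
      using window_spreads[OF t z, of a0 c b0] a0 b0 unfolding A_def by auto
    have "insert v A \<subseteq> A'" using kept v by (auto simp: A'_def)
    then have "Suc (card A) \<le> card A'" using v card_mono[of A' "insert v A"] by simp
    then show ?thesis using count' by simp
  qed
  then show ?thesis unfolding A'_def .
qed

lemma windows_cover:
  assumes t: "t \<ge> 1" and z: "\<And>c. 0 \<le> z $ c" and a0: "c \<le> z $ a0"
  shows "min CARD('n) (Suc n) \<le> card {a. Wmin ^ (n*B) * c \<le> (Phi W t (n*B) *v z) $ a}"
proof (induction n)
  case 0
  have "card {a0} \<le> card {a. c \<le> z $ a}" using a0 by (intro card_mono) auto
  then show ?case by simp
next
  case (Suc n)
  have "min CARD('n) (Suc (Suc n))
      \<le> card {a. Wmin ^ B * (Wmin ^ (n*B) * c) \<le> (Phi W (t + n*B) B *v (Phi W t (n*B) *v z)) $ a}"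
    using t Suc by (intro window_growth Phi_vnn z) auto
  moreover have "Phi W (t + n*B) B *v (Phi W t (n*B) *v z) = Phi W t (Suc n * B) *v z"
    using Phi_add[of W t "n*B" B] by (simp add: matrix_vector_mul_assoc add.commute)
  ultimately show ?case by (simp add: power_add mult.assoc)
qed

definition mix_bound :: real where "mix_bound = Wmin ^ (CARD('n) * B)"

lemma block_entry:
  assumes t: "t \<ge> 1"
  shows "mix_bound \<le> Phi W t (CARD('n) * B) $ a $ b"
proof -
  let ?z = "axis b (1::real)"
  have z: "\<And>c. 0 \<le> ?z $ c" by (simp add: axis_def)
  have mv: "\<And>a. (Phi W t s *v ?z) $ a = Phi W t s $ a $ b" for s
    by (simp add: mv_nth axis_def if_distrib cong: if_cong)
  have "min CARD('n) (Suc CARD('n)) \<le> card {a. Wmin ^ (CARD('n)*B) * 1 \<le> (Phi W t (CARD('n)*B) *v ?z) $ a}"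
    by (rule windows_cover[OF t z]) (simp add: axis_def)
  then have "card (UNIV::'n set) \<le> card {a. Wmin ^ (CARD('n)*B) \<le> (Phi W t (CARD('n)*B) *v ?z) $ a}"
    by simp
  then have "{a. Wmin ^ (CARD('n)*B) \<le> (Phi W t (CARD('n)*B) *v ?z) $ a} = UNIV"
    by (intro card_seteq) auto
  then show ?thesis unfolding mix_bound_def mv by auto
qed

lemma mix_bound_bounds: "0 < mix_bound" "mix_bound < 1"
proof -
  show "0 < mix_bound" unfolding mix_bound_def using Wmin by simp
  have "CARD('n) * B \<noteq> 0" using B_pos by simp
  then show "mix_bound < 1" unfolding mix_bound_def using Wmin by (simp add: power_less_one_iff)
qed

lemma spread_blocks:
  assumes t: "t \<ge> 1" and sp: "spread_le y r"
  shows "spread_le (Phi W t (m * (CARD('n)*B)) *v y) ((1 - mix_bound) ^ m * r)"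
proof (induction m)
  case 0 then show ?case using sp by simp
next
  case (Suc m)
  have t': "t + m * (CARD('n)*B) \<ge> 1" using t by simp
  have "Phi W t (Suc m * (CARD('n)*B)) *v y = Phi W (t + m * (CARD('n)*B)) (CARD('n)*B) *v (Phi W t (m * (CARD('n)*B)) *v y)"
    using Phi_add[of W t "m * (CARD('n)*B)" "CARD('n)*B"] by (simp add: matrix_vector_mul_assoc add.commute)
  moreover have "spread_le \<dots> ((1 - mix_bound) * ((1 - mix_bound) ^ m * r))"
    using mix_bound_bounds by (intro contract_spread[OF Phi_nn[OF t'] Phi_rows[OF t'] block_entry[OF t'] _ _ Suc]) auto
  ultimately show ?case by (simp add: mult.assoc)
qed

lemma spread_any:
  assumes t: "t \<ge> 1" and sp: "spread_le y r"
  shows "spread_le (Phi W t q *v y) r"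
proof -
  have "spread_le (Phi W t q *v y) ((1-0)*r)"
    by (rule contract_spread[OF Phi_nn[OF t] Phi_rows[OF t]]) (auto intro: Phi_nn[OF t] sp)
  then show ?thesis by simp
qed

lemma Phi_uniform_convergence:
  assumes t: "t \<ge> 1"
  shows "\<bar>Phi W t s $ a $ b - 1 / real CARD('n)\<bar> \<le> (1 - mix_bound) ^ (s div (CARD('n)*B))"
proof -
  let ?L = "CARD('n)*B"
  let ?z = "axis b (1::real)"
  have mv: "\<And>a. (Phi W t s *v ?z) $ a = Phi W t s $ a $ b" for s
    by (simp add: mv_nth axis_def if_distrib cong: if_cong)
  have sp0: "spread_le ?z 1" by (simp add: spread_le_def axis_def)
  have sdec: "s = (s div ?L) * ?L + s mod ?L" by (metis div_mult_mod_eq)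
  have "Phi W t s = Phi W (t + (s div ?L) * ?L) (s mod ?L) ** Phi W t ((s div ?L) * ?L)"
    using Phi_add[of W t "(s div ?L) * ?L" "s mod ?L"] sdec by simp
  then have "Phi W t s *v ?z = Phi W (t + (s div ?L) * ?L) (s mod ?L) *v (Phi W t ((s div ?L) * ?L) *v ?z)"
    by (simp add: matrix_vector_mul_assoc)
  moreover have "spread_le \<dots> ((1 - mix_bound) ^ (s div ?L) * 1)"
    using t by (intro spread_any spread_blocks sp0) auto
  ultimately have sp: "spread_le (Phi W t s *v ?z) ((1 - mix_bound) ^ (s div ?L))" by simp
  have sum1: "(\<Sum>a\<in>UNIV. (Phi W t s *v ?z) $ a) = 1"
    using Phi_colsum[OF t] by (simp add: axis_def)
  show ?thesis using spread_abs[OF sp sum1, of a] mv by simp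
qed

end

section \<open>The Gaussian moment generating function\<close>

lemma pd_inv:
  fixes S :: "real^'n^'n"
  assumes pd: "pos_def_mat S"
  shows "S ** matrix_inv S = mat 1" "matrix_inv S ** S = mat 1"
proof -
  have "\<forall>x. S *v x = 0 \<longrightarrow> x = 0"
  proof (intro allI impI)
    fix x :: "real^'n" assume "S *v x = 0"
    then have "x \<bullet> (S *v x) = 0" by simp
    then show "x = 0" using pd unfolding pos_def_mat_def by (metis less_irrefl)
  qed
  then have "invertible S" using matrix_left_invertible_ker invertible_left_inverse by blast
  then have "\<exists>A'. S ** A' = mat 1 \<and> A' ** S = mat 1" by (simp add: invertible_def)
  then have "S ** matrix_inv S = mat 1 \<and> matrix_inv S ** S = mat 1"
    unfolding matrix_inv_def by (rule someI_ex)
  then show "S ** matrix_inv S = mat 1" "matrix_inv S ** S = mat 1" by auto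
qed

text \<open>Completing the square in the Gaussian exponent, for the shift u = S beta.\<close>
lemma quad_shift:
  fixes S :: "real^'n^'n"
  assumes pd: "pos_def_mat S"
  defines "P \<equiv> matrix_inv S"
  shows "- (x \<bullet> (P *v x)) / 2 + \<beta> \<bullet> (d + x)
       = (\<beta> \<bullet> d + \<beta> \<bullet> (S *v \<beta>) / 2) - ((x - S *v \<beta>) \<bullet> (P *v (x - S *v \<beta>))) / 2"
proof -
  let ?u = "S *v \<beta>"
  have PS: "P ** S = mat 1" and SP: "S ** P = mat 1"
    using pd_inv[OF pd] unfolding P_def by auto
  have Pu: "P *v ?u = \<beta>" by (simp add: matrix_vector_mul_assoc PS)
  have tS: "transpose S = S" using pd by (simp add: pos_def_mat_def)
  have tPS: "transpose P ** S = mat 1"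
    by (metis tS matrix_transpose_mul SP transpose_mat)
  have uP: "?u \<bullet> (P *v x) = \<beta> \<bullet> x"
  proof -
    have "?u \<bullet> (P *v x) = (?u v* P) \<bullet> x" by (rule dot_lmul_matrix[symmetric])
    also have "?u v* P = transpose P *v ?u" by simp
    also have "\<dots> = \<beta>" by (simp add: matrix_vector_mul_assoc tPS)
    finally show ?thesis .
  qed
  have "(x - ?u) \<bullet> (P *v (x - ?u)) = x \<bullet> (P *v x) - x \<bullet> \<beta> - ?u \<bullet> (P *v x) + ?u \<bullet> \<beta>"
    by (simp add: matrix_vector_mult_diff_distrib Pu inner_diff_left inner_diff_right)
  also have "\<dots> = x \<bullet> (P *v x) - 2 * (\<beta> \<bullet> x) + \<beta> \<bullet> ?u"
    using uP inner_commute[of x \<beta>] inner_commute[of ?u \<beta>] by linarith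
  finally show ?thesis by (simp add: inner_add_right field_simps)
qed

lemma exp_split_aux: "exp (c - q/2) / (Z::real) = exp c * (exp (- q / 2) / Z)"
proof -
  have "c - q/2 = c + (-q/2)" by simp
  then show ?thesis by (simp only: exp_add times_divide_eq_right)
qed

text \<open>Cumulant generating function of the affine functional beta . (d + X) for X ~ N(0,S).\<close>
definition gauss_cgf :: "real^'n^'n \<Rightarrow> real^'n \<Rightarrow> real^'n \<Rightarrow> real" where
  "gauss_cgf S d \<beta> = \<beta> \<bullet> d + \<beta> \<bullet> (S *v \<beta>) / 2"

lemma density_shift_integral:
  fixes X :: "'a \<Rightarrow> real^'n" and f :: "real^'n \<Rightarrow> ennreal"
  assumes prob: "prob_space M" and dist: "distributed M lborel X f"
  shows "(\<integral>\<^sup>+x. f (x - u) \<partial>lborel) = 1"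
proof -
  have fm: "f \<in> borel_measurable borel"
    using distributed_borel_measurable[OF dist] by simp
  have "(\<integral>\<^sup>+x. f x * 1 \<partial>lborel) = (\<integral>\<^sup>+x. 1 \<partial>M)"
    using distributed_nn_integral[OF dist, of "\<lambda>_. 1"] by simp
  also have "\<dots> = 1" using prob by (simp add: prob_space.emeasure_space_1)
  finally have total: "(\<integral>\<^sup>+x. f x \<partial>lborel) = 1" by simp
  have "(\<integral>\<^sup>+x. f x \<partial>lborel) = (\<integral>\<^sup>+x. f x \<partial>distr lborel borel ((+) (- u)))"
    by (simp add: lborel_distr_plus)
  also have "\<dots> = (\<integral>\<^sup>+x. f (- u + x) \<partial>lborel)"
    by (rule nn_integral_distr) (auto simp: fm)
  finally show ?thesis using total by simp
qed

lemma gauss_density_tilt: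
  fixes S :: "real^'n^'n"
  assumes pd: "pos_def_mat S"
  shows "gauss_density S x * ennreal (exp (\<beta> \<bullet> (d + x)))
       = ennreal (exp (gauss_cgf S d \<beta>)) * gauss_density S (x - S *v \<beta>)"
proof -
  let ?u = "S *v \<beta>"
  let ?c = "gauss_cgf S d \<beta>"
  let ?Z = "sqrt ((2 * pi) ^ CARD('n) * det S)"
  have "gauss_density S x * ennreal (exp (\<beta> \<bullet> (d + x)))
      = ennreal (exp (- (x \<bullet> (matrix_inv S *v x)) / 2) / ?Z * exp (\<beta> \<bullet> (d + x)))"
    unfolding gauss_density_def by (subst ennreal_mult''[symmetric]) auto
  also have "exp (- (x \<bullet> (matrix_inv S *v x)) / 2) / ?Z * exp (\<beta> \<bullet> (d + x))
     = exp (- (x \<bullet> (matrix_inv S *v x)) / 2 + \<beta> \<bullet> (d + x)) / ?Z"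
    by (simp only: exp_add times_divide_eq_left)
  also have "\<dots> = exp ?c * (exp (- ((x - ?u) \<bullet> (matrix_inv S *v (x - ?u))) / 2) / ?Z)"
    unfolding quad_shift[OF pd] gauss_cgf_def by (rule exp_split_aux)
  also have "ennreal \<dots> = ennreal (exp ?c) * gauss_density S (x - ?u)"
    unfolding gauss_density_def by (subst ennreal_mult'[symmetric]) auto
  finally show ?thesis .
qed

lemma gauss_mgf:
  fixes S :: "real^'n^'n" and X :: "'a \<Rightarrow> real^'n"
  assumes prob: "prob_space M" and pd: "pos_def_mat S"
    and dist: "distributed M lborel X (gauss_density S)"
  shows "(\<integral>\<^sup>+\<omega>. ennreal (exp (\<beta> \<bullet> (d + X \<omega>))) \<partial>M) = ennreal (exp (gauss_cgf S d \<beta>))"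
proof -
  let ?g = "gauss_density S"
  have gm: "?g \<in> borel_measurable borel"
    using distributed_borel_measurable[OF dist] by simp
  have "(\<integral>\<^sup>+\<omega>. ennreal (exp (\<beta> \<bullet> (d + X \<omega>))) \<partial>M)
      = (\<integral>\<^sup>+x. ?g x * ennreal (exp (\<beta> \<bullet> (d + x))) \<partial>lborel)"
    by (rule distributed_nn_integral[OF dist, symmetric]) measurable
  also have "\<dots> = (\<integral>\<^sup>+x. ennreal (exp (gauss_cgf S d \<beta>)) * ?g (x - S *v \<beta>) \<partial>lborel)"
    by (simp add: gauss_density_tilt[OF pd])
  also have "\<dots> = ennreal (exp (gauss_cgf S d \<beta>)) * (\<integral>\<^sup>+x. ?g (x - S *v \<beta>) \<partial>lborel)"
    by (rule nn_integral_cmult) (simp, rule measurable_compose[OF _ gm], measurable)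
  also have "\<dots> = ennreal (exp (gauss_cgf S d \<beta>))"
    using density_shift_integral[OF prob dist] by simp
  finally show ?thesis .
qed

lemma expectation_exp_sum_indep_gauss:
  fixes M :: "'a measure" and \<zeta> :: "nat \<Rightarrow> 'a \<Rightarrow> real^'n" and b :: "nat \<Rightarrow> real^'n"
  assumes prob: "prob_space M" and pd: "pos_def_mat S"
    and indep: "prob_space.indep_vars M (\<lambda>_. borel) \<zeta> {1..}"
    and gauss: "\<And>t. t \<ge> 1 \<Longrightarrow> distributed M lborel (\<zeta> t) (gauss_density S)"
  shows "prob_space.expectation M (\<lambda>\<omega>. exp (\<Sum>t\<in>{1..k}. b t \<bullet> (d + \<zeta> t \<omega>)))
       = exp (\<Sum>t\<in>{1..k}. gauss_cgf S d (b t))"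
proof -
  interpret P: prob_space M by (rule prob)
  let ?F = "\<lambda>\<omega>. \<Sum>t\<in>{1..k}. b t \<bullet> (d + \<zeta> t \<omega>)"
  have summand_meas: "(\<lambda>\<omega>. b t \<bullet> (d + \<zeta> t \<omega>)) \<in> borel_measurable M" if "t \<in> {1..k}" for t
  proof -
    have [measurable]: "\<zeta> t \<in> borel_measurable M"
      using indep that unfolding P.indep_vars_def by auto
    show ?thesis by measurable
  qed
  have "P.expectation (\<lambda>\<omega>. exp (?F \<omega>)) = enn2real (\<integral>\<^sup>+\<omega>. ennreal (exp (?F \<omega>)) \<partial>M)"
  proof (rule integral_eq_nn_integral)
    have [measurable]: "?F \<in> borel_measurable M" by (rule borel_measurable_sum, rule summand_meas)
    show "(\<lambda>\<omega>. exp (?F \<omega>)) \<in> borel_measurable M" by measurable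
  qed auto
  also have "(\<integral>\<^sup>+\<omega>. ennreal (exp (?F \<omega>)) \<partial>M)
           = (\<integral>\<^sup>+\<omega>. (\<Prod>t\<in>{1..k}. ennreal (exp (b t \<bullet> (d + \<zeta> t \<omega>)))) \<partial>M)"
    by (intro nn_integral_cong) (simp add: exp_sum prod_ennreal)
  also have "\<dots> = (\<Prod>t\<in>{1..k}. \<integral>\<^sup>+\<omega>. ennreal (exp (b t \<bullet> (d + \<zeta> t \<omega>))) \<partial>M)"
  proof (rule P.indep_vars_nn_integral)
    show "P.indep_vars (\<lambda>_. borel) (\<lambda>t \<omega>. ennreal (exp (b t \<bullet> (d + \<zeta> t \<omega>)))) {1..k}"
      using P.indep_vars_compose2[OF P.indep_vars_subset[OF indep, of "{1..k}"],
          of "\<lambda>t z. ennreal (exp (b t \<bullet> (d + z)))" "\<lambda>_. borel"]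
      by auto
  qed auto
  also have "\<dots> = (\<Prod>t\<in>{1..k}. ennreal (exp (gauss_cgf S d (b t))))"
    by (intro prod.cong refl) (simp add: gauss_mgf[OF prob pd gauss])
  also have "\<dots> = ennreal (exp (\<Sum>t\<in>{1..k}. gauss_cgf S d (b t)))"
    by (simp add: prod_ennreal exp_sum)
  finally show ?thesis by simp
qed

lemma quad_form:
  fixes S :: "real^'n^'n"
  shows "(\<chi> j. c j * p j) \<bullet> d + (\<chi> j. c j * p j) \<bullet> (S *v (\<chi> j. c j * p j)) / 2
   = (\<Sum>j\<in>UNIV. (c j * d $ j) * p j) + (\<Sum>j\<in>UNIV. \<Sum>j'\<in>UNIV. (c j * S $ j $ j' * c j' / 2) * p j * p j')"
  by (simp add: inner_vec_def matrix_vector_mult_def sum_distrib_left sum_divide_distrib algebra_simps)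

lemma quad_diff_bound:
  fixes p q :: "'n::finite \<Rightarrow> real"
  assumes p: "\<And>j. \<bar>p j\<bar> \<le> 1" and q: "\<And>j. \<bar>q j\<bar> \<le> 1" and pq: "\<And>j. \<bar>p j - q j\<bar> \<le> r"
  shows "\<bar>((\<Sum>j\<in>UNIV. A j * p j) + (\<Sum>j\<in>UNIV. \<Sum>j'\<in>UNIV. Bm j j' * p j * p j'))
        - ((\<Sum>j\<in>UNIV. A j * q j) + (\<Sum>j\<in>UNIV. \<Sum>j'\<in>UNIV. Bm j j' * q j * q j'))\<bar>
     \<le> ((\<Sum>j\<in>UNIV. \<bar>A j\<bar>) + 2 * (\<Sum>j\<in>UNIV. \<Sum>j'\<in>UNIV. \<bar>Bm j j'\<bar>)) * r"
proof -
  have r0: "0 \<le> r" using pq[of undefined] by (meson abs_ge_zero order_trans)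
  have t1: "\<bar>A j * p j - A j * q j\<bar> \<le> \<bar>A j\<bar> * r" for j
    using pq[of j] by (simp add: right_diff_distrib[symmetric] abs_mult mult_left_mono)
  have t2: "\<bar>Bm j j' * p j * p j' - Bm j j' * q j * q j'\<bar> \<le> 2 * \<bar>Bm j j'\<bar> * r" for j j'
  proof -
    have "\<bar>p j * p j' - q j * q j'\<bar> = \<bar>(p j - q j) * p j' + q j * (p j' - q j')\<bar>"
      by (simp add: algebra_simps)
    also have "\<dots> \<le> \<bar>p j - q j\<bar> * \<bar>p j'\<bar> + \<bar>q j\<bar> * \<bar>p j' - q j'\<bar>"
      by (simp add: abs_mult abs_triangle_ineq[THEN order_trans])
    also have "\<dots> \<le> r * 1 + 1 * r"
      using p q pq r0 by (intro add_mono mult_mono) auto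
    finally have "\<bar>p j * p j' - q j * q j'\<bar> \<le> 2 * r" by simp
    then have "\<bar>Bm j j'\<bar> * \<bar>p j * p j' - q j * q j'\<bar> \<le> \<bar>Bm j j'\<bar> * (2 * r)"
      by (intro mult_left_mono) auto
    then show ?thesis by (simp add: abs_mult[symmetric] algebra_simps)
  qed
  have "\<bar>((\<Sum>j\<in>UNIV. A j * p j) + (\<Sum>j\<in>UNIV. \<Sum>j'\<in>UNIV. Bm j j' * p j * p j'))
        - ((\<Sum>j\<in>UNIV. A j * q j) + (\<Sum>j\<in>UNIV. \<Sum>j'\<in>UNIV. Bm j j' * q j * q j'))\<bar>
      = \<bar>(\<Sum>j\<in>UNIV. A j * p j - A j * q j) + (\<Sum>j\<in>UNIV. \<Sum>j'\<in>UNIV. Bm j j' * p j * p j' - Bm j j' * q j * q j')\<bar>"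
    by (simp add: sum_subtractf)
  also have "\<dots> \<le> (\<Sum>j\<in>UNIV. \<bar>A j * p j - A j * q j\<bar>) + (\<Sum>j\<in>UNIV. \<Sum>j'\<in>UNIV. \<bar>Bm j j' * p j * p j' - Bm j j' * q j * q j'\<bar>)"
    by (rule order_trans[OF abs_triangle_ineq add_mono[OF sum_abs order_trans[OF sum_abs sum_mono[OF sum_abs]]]])
  also have "\<dots> \<le> (\<Sum>j\<in>UNIV. \<bar>A j\<bar> * r) + (\<Sum>j\<in>UNIV. \<Sum>j'\<in>UNIV. 2 * \<bar>Bm j j'\<bar> * r)"
    by (intro add_mono sum_mono t1 t2)
  also have "\<dots> = ((\<Sum>j\<in>UNIV. \<bar>A j\<bar>) + 2 * (\<Sum>j\<in>UNIV. \<Sum>j'\<in>UNIV. \<bar>Bm j j'\<bar>)) * r"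
    by (simp add: sum_distrib_left sum_distrib_right algebra_simps)
  finally show ?thesis .
qed

lemma gauss_cgf_perturbation:
  fixes c p q :: "'n::finite \<Rightarrow> real" and S :: "real^'n^'n"
  assumes "\<And>j. \<bar>p j\<bar> \<le> 1" "\<And>j. \<bar>q j\<bar> \<le> 1" "\<And>j. \<bar>p j - q j\<bar> \<le> r"
  shows "\<bar>gauss_cgf S d (\<chi> j. c j * p j) - gauss_cgf S d (\<chi> j. c j * q j)\<bar>
     \<le> ((\<Sum>j\<in>UNIV. \<bar>c j * d $ j\<bar>) + 2 * (\<Sum>j\<in>UNIV. \<Sum>j'\<in>UNIV. \<bar>c j * S $ j $ j' * c j' / 2\<bar>)) * r"
  unfolding gauss_cgf_def quad_form by (rule quad_diff_bound[OF assms])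

lemma gauss_cgf_decision_statistic:
  fixes S :: "real^'n^'n" and m0 m1 :: "real^'n"
  assumes pd: "pos_def_mat S" and l01: "l \<in> {0, 1::nat}"
  defines "\<sigma> \<equiv> (m1 - m0) \<bullet> (matrix_inv S *v (m1 - m0))"
  shows "gauss_cgf S (\<chi> j. (if l = 0 then m0 else m1) $ j - (m1 $ j + m0 $ j) / 2)
                     (\<mu> *\<^sub>R (matrix_inv S *v (m1 - m0)))
       = \<sigma> * \<mu>\<^sup>2 / 2 + (-1) ^ (l + 1) / 2 * \<sigma> * \<mu>"
proof -
  define D where "D = m1 - m0"
  define v where "v = matrix_inv S *v D"
  define d where "d = (\<chi> j. (if l = 0 then m0 else m1) $ j - (m1 $ j + m0 $ j) / 2)"
  have Sv: "S *v v = D" using pd_inv(1)[OF pd] by (simp add: v_def matrix_vector_mul_assoc)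
  have "d = (if l = 0 then - (1/2) else 1/2) *\<^sub>R D"
    using l01 by (auto simp: vec_eq_iff d_def D_def field_simps)
  then have vd: "v \<bullet> d = (if l = 0 then - \<sigma>/2 else \<sigma>/2)"
    by (simp add: \<sigma>_def D_def v_def inner_commute)
  have vD: "v \<bullet> D = \<sigma>" by (simp add: \<sigma>_def D_def v_def inner_commute)
  have "gauss_cgf S d (\<mu> *\<^sub>R v) = \<mu> * (v \<bullet> d) + \<mu> * \<mu> * (v \<bullet> D) / 2"
    by (simp add: gauss_cgf_def matrix_vector_mult_scaleR Sv)
  then show ?thesis
    unfolding d_def[symmetric] v_def[symmetric] D_def[symmetric] vD vd using l01
    by (auto simp: power2_eq_square field_simps)
qed

section \<open>An averaging lemma\<close>

lemma block_geom:
  fixes \<rho> :: real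
  assumes r: "0 \<le> \<rho>" "\<rho> < 1" and L: "L \<ge> 1"
  shows "(\<Sum>s<n. \<rho> ^ (s div L)) \<le> real L / (1 - \<rho>)"
proof -
  have eq: "(\<Sum>s<m*L. \<rho> ^ (s div L)) = real L * (\<Sum>j<m. \<rho> ^ j)" for m
  proof (induction m)
    case 0 then show ?case by simp
  next
    case (Suc m)
    have "(\<Sum>s<Suc m*L. \<rho> ^ (s div L)) = (\<Sum>s<m*L. \<rho> ^ (s div L)) + (\<Sum>s\<in>{m*L..<m*L+L}. \<rho> ^ (s div L))"
      by (simp add: add.commute sum.atLeastLessThan_concat[symmetric] lessThan_atLeast0
            flip: sum.atLeastLessThan_concat)
    also have "(\<Sum>s\<in>{m*L..<m*L+L}. \<rho> ^ (s div L)) = (\<Sum>s\<in>{m*L..<m*L+L}. \<rho> ^ m)"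
    proof (rule sum.cong)
      fix s assume "s \<in> {m*L..<m*L+L}"
      then have "s div L = m" using L by (auto intro: div_nat_eqI simp: algebra_simps)
      then show "\<rho> ^ (s div L) = \<rho> ^ m" by simp
    qed simp
    finally show ?case using Suc by (simp add: algebra_simps)
  qed
  have "(\<Sum>s<n. \<rho> ^ (s div L)) \<le> (\<Sum>s<n*L. \<rho> ^ (s div L))"
    using L r by (intro sum_mono2) auto
  also have "\<dots> = real L * (\<Sum>j<n. \<rho> ^ j)" by (rule eq)
  also have "(\<Sum>j<n. \<rho> ^ j) = (1 - \<rho> ^ n) / (1 - \<rho>)" using r by (simp add: sum_gp_strict)
  also have "\<dots> \<le> 1 / (1 - \<rho>)" using r by (intro divide_right_mono) auto
  finally show ?thesis using r by (simp add: mult_left_mono divide_inverse)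
qed

lemma rev_sum: fixes k :: nat shows "(\<Sum>t\<in>{1..k}. f (k - t)) = (\<Sum>s<k. f s)"
proof -
  have "{1..k} = Suc ` {..<k}" by (simp add: image_Suc_lessThan)
  then have "(\<Sum>t\<in>{1..k}. f (k - t)) = (\<Sum>i<k. f (k - Suc i))"
    by (simp add: sum.reindex)
  also have "\<dots> = (\<Sum>s<k. f s)" by (rule sum.nat_diff_reindex)
  finally show ?thesis .
qed

text \<open>Cesaro-type limit: if the t-th of k terms is within K rho^((k-t) div L) of c, then the
  average of the k terms tends to c; the total error stays bounded while k grows.\<close>
lemma averaged_geometric_limit:
  fixes a :: "nat \<Rightarrow> nat \<Rightarrow> real" and \<rho> :: real
  assumes \<rho>: "0 \<le> \<rho>" "\<rho> < 1" and L: "L \<ge> 1" and K: "0 \<le> K"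
    and close: "\<And>k t. 1 \<le> t \<Longrightarrow> t \<le> k \<Longrightarrow> \<bar>a k t - c\<bar> \<le> K * \<rho> ^ ((k - t) div L)"
  shows "(\<lambda>k. (\<Sum>t\<in>{1..k}. a k t) / real k) \<longlonglongrightarrow> c"
proof -
  define C0 where "C0 = K * (real L / (1 - \<rho>))"
  have error: "eventually (\<lambda>k. norm ((\<Sum>t\<in>{1..k}. a k t) / real k - c) \<le> C0 / real k) sequentially"
    using eventually_ge_at_top[of "1::nat"]
  proof eventually_elim
    case (elim k)
    have kp: "real k > 0" using elim by simp
    have "\<bar>\<Sum>t\<in>{1..k}. a k t - c\<bar> \<le> (\<Sum>t\<in>{1..k}. K * \<rho> ^ ((k - t) div L))"
      by (rule order_trans[OF sum_abs sum_mono]) (rule close, auto)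
    also have "\<dots> = K * (\<Sum>s<k. \<rho> ^ (s div L))"
      unfolding sum_distrib_left[symmetric] rev_sum[of "\<lambda>s. \<rho> ^ (s div L)"] ..
    also have "\<dots> \<le> C0"
      unfolding C0_def using block_geom[OF \<rho> L, of k] K by (intro mult_left_mono) auto
    finally have "\<bar>\<Sum>t\<in>{1..k}. a k t - c\<bar> \<le> C0" .
    moreover have "(\<Sum>t\<in>{1..k}. a k t) / real k - c = (\<Sum>t\<in>{1..k}. a k t - c) / real k"
      using kp by (simp add: sum_subtractf field_simps)
    ultimately show ?case using kp by (simp add: abs_divide divide_right_mono)
  qed
  have "(\<lambda>k. C0 / real k) \<longlonglongrightarrow> 0" by (rule lim_const_over_n)
  then have "(\<lambda>k. (\<Sum>t\<in>{1..k}. a k t) / real k - c) \<longlonglongrightarrow> 0"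
    by (rule Lim_null_comparison[OF error])
  then show ?thesis by (simp add: Lim_null[symmetric])
qed

section \<open>The log moment generating function of the consensus state\<close>

lemma (in consensus_network) log_mgf_limit:
  fixes M :: "'a measure" and \<zeta> :: "nat \<Rightarrow> 'a \<Rightarrow> real^'n"
  assumes prob: "prob_space M" and pd: "pos_def_mat S"
    and indep: "prob_space.indep_vars M (\<lambda>_. borel) \<zeta> {1..}"
    and gauss: "\<And>t. t \<ge> 1 \<Longrightarrow> distributed M lborel (\<zeta> t) (gauss_density S)"
  shows "(\<lambda>k. ln (prob_space.expectation M
             (\<lambda>\<omega>. exp (\<Sum>t\<in>{1..k}. consensus_weight W i \<mu> v k t \<bullet> (d + \<zeta> t \<omega>)))) / real k)
           \<longlonglongrightarrow> gauss_cgf S d (\<mu> *\<^sub>R v)"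
proof -
  define N where "N = real CARD('n)"
  define c where "c j = \<mu> * N * v $ j" for j
  define K where "K = (\<Sum>j\<in>UNIV. \<bar>c j * d $ j\<bar>) + 2 * (\<Sum>j\<in>UNIV. \<Sum>j'\<in>UNIV. \<bar>c j * S $ j $ j' * c j' / 2\<bar>)"
  have weight: "consensus_weight W i \<mu> v k t = (\<chi> j. c j * Phi W t (k - t) $ i $ j)" for k t
    by (simp add: consensus_weight_def c_def N_def)
  have limit_weight: "\<mu> *\<^sub>R v = (\<chi> j. c j * (1 / N))"
    by (simp add: vec_eq_iff c_def N_def)
  have close: "\<bar>gauss_cgf S d (consensus_weight W i \<mu> v k t) - gauss_cgf S d (\<mu> *\<^sub>R v)\<bar>
      \<le> K * (1 - mix_bound) ^ ((k - t) div (CARD('n) * B))" if t: "1 \<le> t" for k t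
    unfolding weight limit_weight K_def
  proof (rule gauss_cgf_perturbation)
    show "\<bar>Phi W t (k - t) $ i $ j\<bar> \<le> 1" for j using Phi_nn[OF t] Phi_le1[OF t] by simp
    show "\<bar>1 / N\<bar> \<le> 1" by (simp add: N_def)
    show "\<bar>Phi W t (k - t) $ i $ j - 1 / N\<bar> \<le> (1 - mix_bound) ^ ((k - t) div (CARD('n) * B))" for j
      using Phi_uniform_convergence[OF t] by (simp add: N_def)
  qed
  have K: "0 \<le> K" unfolding K_def by (auto intro!: add_nonneg_nonneg sum_nonneg)
  have "(\<lambda>k. (\<Sum>t\<in>{1..k}. gauss_cgf S d (consensus_weight W i \<mu> v k t)) / real k)
          \<longlonglongrightarrow> gauss_cgf S d (\<mu> *\<^sub>R v)"
    by (rule averaged_geometric_limit[where \<rho> = "1 - mix_bound" and L = "CARD('n) * B", OF _ _ _ K close])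
      (use mix_bound_bounds B_pos in auto)
  moreover have "prob_space.expectation M
             (\<lambda>\<omega>. exp (\<Sum>t\<in>{1..k}. consensus_weight W i \<mu> v k t \<bullet> (d + \<zeta> t \<omega>)))
      = exp (\<Sum>t\<in>{1..k}. gauss_cgf S d (consensus_weight W i \<mu> v k t))" for k
    by (rule expectation_exp_sum_indep_gauss[OF prob pd indep gauss])
  ultimately show ?thesis by simp
qed

theorem mainTheorem4:
  fixes M :: "'a measure"
    and \<zeta> :: "nat \<Rightarrow> 'a \<Rightarrow> real^'n"
    and m0 m1 :: "real^'n"
    and S :: "real^'n^'n"
    and W :: "nat \<Rightarrow> real^'n^'n"
    and Wmin :: real
    and B :: nat
    and i :: 'n
    and l :: nat
    and \<mu> :: real
  assumes prob: "prob_space M"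
    and S_pd: "pos_def_mat S"
    and indep: "prob_space.indep_vars M (\<lambda>_. borel) \<zeta> {1..}"
    and gauss: "\<And>k. k \<ge> 1 \<Longrightarrow> distributed M lborel (\<zeta> k) (gauss_density S)"
    and W_sym: "\<And>k. k \<ge> 1 \<Longrightarrow> transpose (W k) = W k"
    and W_stoch: "\<And>k. k \<ge> 1 \<Longrightarrow> stochastic_mat (W k)"
    and Wmin: "0 < Wmin" "Wmin < 1"
    and W_diag: "\<And>k j. k \<ge> 1 \<Longrightarrow> W k $ j $ j \<ge> Wmin"
    and W_off: "\<And>k j j'. k \<ge> 1 \<Longrightarrow> j \<noteq> j' \<Longrightarrow> W k $ j $ j' > 0 \<Longrightarrow> W k $ j $ j' \<ge> Wmin"
    and B_pos: "B \<ge> 1"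
    and conn: "\<And>k. graph_connected (\<Union>t\<in>{k+1..k+B}. edges_of (W t))"
    and l01: "l \<in> {0, 1}"
  shows
    "let m_l = (if l = 0 then m0 else m1);
         y = (\<lambda>k \<omega>. m_l + \<zeta> k \<omega>);
         x = (\<lambda>k \<omega>. run_cons W (\<lambda>t. eta_of S m0 m1 (y t \<omega>)) k);
         \<sigma>L2 = (m1 - m0) \<bullet> (matrix_inv S *v (m1 - m0));
         mL = (-1) ^ (l + 1) / 2 * \<sigma>L2
     in (\<lambda>k. ln (prob_space.expectation M (\<lambda>\<omega>. exp (real k * \<mu> * (x k \<omega>) $ i))) / real k)
          \<longlonglongrightarrow> \<sigma>L2 * \<mu>\<^sup>2 / 2 + mL * \<mu>"
proof -
  interpret network: consensus_network W Wmin B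
    using W_sym W_stoch Wmin W_diag W_off B_pos conn by unfold_locales auto
  define m_l where "m_l = (if l = 0 then m0 else m1)"
  define v where "v = matrix_inv S *v (m1 - m0)"
  define d where "d = (\<chi> j. m_l $ j - (m1 $ j + m0 $ j) / 2)"
  have exponent: "real k * \<mu> * (run_cons W (\<lambda>t. eta_of S m0 m1 (m_l + \<zeta> t \<omega>)) k) $ i
      = (\<Sum>t\<in>{1..k}. consensus_weight W i \<mu> v k t \<bullet> (d + \<zeta> t \<omega>))" for k \<omega>
    unfolding v_def d_def by (rule scaled_consensus_state)
  have limit: "(\<lambda>k. ln (prob_space.expectation M
             (\<lambda>\<omega>. exp (\<Sum>t\<in>{1..k}. consensus_weight W i \<mu> v k t \<bullet> (d + \<zeta> t \<omega>)))) / real k)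
          \<longlonglongrightarrow> gauss_cgf S d (\<mu> *\<^sub>R v)"
    by (rule network.log_mgf_limit[OF prob S_pd indep gauss])
  have limit_value: "gauss_cgf S d (\<mu> *\<^sub>R v)
      = (m1 - m0) \<bullet> v * \<mu>\<^sup>2 / 2 + (-1) ^ (l + 1) / 2 * ((m1 - m0) \<bullet> v) * \<mu>"
    unfolding d_def m_l_def v_def by (rule gauss_cgf_decision_statistic[OF S_pd l01])
  show ?thesis
    unfolding Let_def m_l_def[symmetric] v_def[symmetric] exponent limit_value[symmetric] by (rule limit)
qed

end
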